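(* Let $\mathcal{C}[\cdot]$ be a certified admitted linear guarded one-hole context with hole type $\mathbb{B}_{M_Y}(Y)\to\mathbb{B}_{M_X}(X)$, with perturbation gain $L(\mathcal{C})<\infty$ and closed-context contraction modulus $\kappa(\mathcal{C})<1$. Let $\mathsf{M},\mathsf{N}$ be components whose transformers $\mathcal{T}_{\mathsf M},\mathcal{T}_{\mathsf N}:\mathbb{B}_{M_Y}(Y)\to\mathbb{B}_{M_X}(X)$ have this hole type, with all side components and certificates identical in the two circuits $\mathcal{C}[\mathsf M]$, $\mathcal{C}[\mathsf N]$, and assume the induced closed-loop operators $\mathcal{T}_{\mathcal{C}[\mathsf M]},\mathcal{T}_{\mathcal{C}[\mathsf N]}$ are self-maps of a common ball $\mathbb{B}_M(S)$ and are $\kappa(\mathcal{C})$-contractions there; let $V_{\mathcal{C}[\mathsf M]},V_{\mathcal{C}[\mathsf N]}$ be their unique fixed points. If $d_\infty^{X\leftarrow Y}(\mathcal{T}_{\mathsf M},\mathcal{T}_{\mathsf N})\le\varepsilon$, then \[\|V_{\mathcal{C}[\mathsf M]}-V_{\mathcal{C}[\mathsf N]}\|_\infty\le\frac{L(\mathcal{C})}{1-\kappa(\mathcal{C})}\,\varepsilon.\]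
   Context: For a measurable space $X$, $\mathcal{B}(X)$ is the space of bounded measurable real functions with sup norm and $\mathbb{B}_M(X):=\{V\in\mathcal{B}(X):\|V\|_\infty\le M\}$. For typed transformers $T,T':\mathbb{B}_{M_Y}(Y)\to\mathbb{B}_{M_X}(X)$, $d_\infty^{X\leftarrow Y}(T,T'):=\sup_{V\in\mathbb{B}_{M_Y}(Y)}\|TV-T'V\|_\infty$ (written $d_\infty^{(S,M)}$ when $X=Y=S$, $M_X=M_Y=M$). A linear one-hole context is a well-typed expression generated by $\mathcal{C}::=[\cdot]\mid T_0\circ\mathcal{C}\mid\mathcal{C}\circ T_0\mid\mathcal{C}\otimes T_0\mid T_0\otimes\mathcal{C}\mid\mathsf{Tr}^Z(\mathcal{D})$, where $T_0$ are fixed side transformers, $\otimes$ uses the product sup metric, $\mathsf{Tr}^Z$ is the guarded Banach trace (for $F=(F_Y,F_Z):X\times Z\to Y\times Z$ with $F_Z$ uniformly contractive in $z$, $\mathsf{Tr}^Z(F)(x)=F_Y(x,z_x)$ where $z_x=F_Z(x,z_x)$ is the unique fixed point), and the hole occurs exactly once (no copying, merging, or nonlinear inspection of the hole). It is certified/admitted if every subexpression carries invariant source/target balls, Lipschitz constants for side transformers, uniform guardedness constants at each trace node, and a finite perturbation gain $L(\mathcal{C})$ with the property that $d_\infty^{(S,M)}(\mathcal{T}_{\mathcal{C}[\mathsf M]},\mathcal{T}_{\mathcal{C}[\mathsf N]})\le L(\mathcal{C})\,d_\infty^{X\leftarrow Y}(\mathcal{T}_{\mathsf M},\mathcal{T}_{\mathsf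 N})$ for all compatible components $\mathsf M,\mathsf N$ with the hole type, and (for a closed context) a contraction modulus $\kappa(\mathcal{C})<1$ of the induced closed-loop operator on its invariant ball. *)

theory Defs
  imports "HOL-Analysis.Analysis"
begin

text \<open>Sup norm of a real function on the points of a measurable space, valued in
  ennreal (so that it is always defined, and equals 0 on an empty space).\<close>
definition supnorm :: "'a measure \<Rightarrow> ('a \<Rightarrow> real) \<Rightarrow> ennreal" where
  "supnorm X f = (SUP x\<in>space X. ennreal \<bar>f x\<bar>)"

definition bball :: "'a measure \<Rightarrow> real \<Rightarrow> ('a \<Rightarrow> real) set" where
  "bball X M = {V. V \<in> borel_measurable X \<and> (\<forall>x\<in>space X. \<bar>V x\<bar> \<le> M)}"

definition transformer ::
    "'y measure \<Rightarrow> real \<Rightarrow> 'x measure \<Rightarrow> real \<Rightarrow> (('y \<Rightarrow> real) \<Rightarrow> ('x \<Rightarrow> real)) \<Rightarrow> bool" where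
  "transformer Y MY X MX T \<longleftrightarrow> (\<forall>V\<in>bball Y MY. T V \<in> bball X MX)"

definition dinf ::
    "'y measure \<Rightarrow> real \<Rightarrow> 'x measure \<Rightarrow> (('y \<Rightarrow> real) \<Rightarrow> ('x \<Rightarrow> real))
       \<Rightarrow> (('y \<Rightarrow> real) \<Rightarrow> ('x \<Rightarrow> real)) \<Rightarrow> ennreal" where
  "dinf Y MY X T T' = (SUP V\<in>bball Y MY. supnorm X (\<lambda>x. T V x - T' V x))"

text \<open>A certified linear one-hole context, viewed semantically: the map ctx sending the
  transformer of the component plugged into the hole (of hole type
  B_{MY}(Y) -> B_{MX}(X)) to the induced closed-loop operator on functions on S,
  together with its certified finite perturbation gain L.\<close>
definition certified_gain ::
    "'y measure \<Rightarrow> real \<Rightarrow> 'x measure \<Rightarrow> real \<Rightarrow> 's measure \<Rightarrow> real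
      \<Rightarrow> ((('y \<Rightarrow> real) \<Rightarrow> ('x \<Rightarrow> real)) \<Rightarrow> (('s \<Rightarrow> real) \<Rightarrow> ('s \<Rightarrow> real))) \<Rightarrow> real \<Rightarrow> bool" where
  "certified_gain Y MY X MX S M ctx L \<longleftrightarrow> 0 \<le> L \<and>
     (\<forall>T T'. transformer Y MY X MX T \<longrightarrow> transformer Y MY X MX T' \<longrightarrow>
        dinf S M S (ctx T) (ctx T') \<le> ennreal L * dinf Y MY X T T')"

definition contraction_on_ball ::
    "'s measure \<Rightarrow> real \<Rightarrow> (('s \<Rightarrow> real) \<Rightarrow> ('s \<Rightarrow> real)) \<Rightarrow> real \<Rightarrow> bool" where
  "contraction_on_ball S M T \<kappa> \<longleftrightarrow>
     (\<forall>V\<in>bball S M. T V \<in> bball S M) \<and>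
     (\<forall>V\<in>bball S M. \<forall>W\<in>bball S M.
        supnorm S (\<lambda>s. T V s - T W s) \<le> ennreal \<kappa> * supnorm S (\<lambda>s. V s - W s))"

end

theory Submission
  imports Defs
begin

text \<open>Subtracting the two fixed-point equations and inserting the cross term
  \<open>ctx TM VN\<close> gives \<open>\<parallel>VM - VN\<parallel> \<le> \<kappa> \<parallel>VM - VN\<parallel> + \<parallel>ctx TM VN - ctx TN VN\<parallel>\<close>; the last term
  is at most \<open>L \<epsilon>\<close> by the certified gain, and solving for the (finite) distance yields
  the bound \<open>L \<epsilon> / (1 - \<kappa>)\<close>.\<close>

lemma supnorm_add_le: "supnorm S (\<lambda>s. u s + v s) \<le> supnorm S u + supnorm S v"
  unfolding supnorm_def
proof (rule SUP_least)
  fix x assume x: "x \<in> space S"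
  have "ennreal \<bar>u x + v x\<bar> \<le> ennreal (\<bar>u x\<bar> + \<bar>v x\<bar>)"
    by (rule ennreal_leI) (rule abs_triangle_ineq)
  also have "\<dots> = ennreal \<bar>u x\<bar> + ennreal \<bar>v x\<bar>"
    by (simp add: ennreal_plus)
  also have "\<dots> \<le> (SUP x\<in>space S. ennreal \<bar>u x\<bar>) + (SUP x\<in>space S. ennreal \<bar>v x\<bar>)"
    by (intro add_mono SUP_upper x)
  finally show "ennreal \<bar>u x + v x\<bar> \<le> \<dots>" .
qed

lemma supnorm_le_ennreal: "(\<And>x. x \<in> space S \<Longrightarrow> \<bar>u x\<bar> \<le> B) \<Longrightarrow> supnorm S u \<le> ennreal B"
  unfolding supnorm_def by (rule SUP_least) (simp add: ennreal_leI)

lemma supnorm_diff_bball_neq_top: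
  assumes "V \<in> bball S M" "W \<in> bball S M"
  shows "supnorm S (\<lambda>s. V s - W s) \<noteq> top"
proof -
  have "supnorm S (\<lambda>s. V s - W s) \<le> ennreal (M + M)"
    using assms by (intro supnorm_le_ennreal) (fastforce simp: bball_def)
  then show ?thesis
    by (metis ennreal_neq_top neq_top_trans)
qed

lemma supnorm_le_dinf:
  "V \<in> bball Y MY \<Longrightarrow> supnorm X (\<lambda>x. T V x - T' V x) \<le> dinf Y MY X T T'"
  unfolding dinf_def by (rule SUP_upper)

lemma ennreal_le_div_of_le_contraction:
  fixes \<kappa> c :: real
  assumes "d \<noteq> top" "0 \<le> \<kappa>" "\<kappa> < 1"
    and le: "d \<le> ennreal \<kappa> * d + ennreal c"
  shows "d \<le> ennreal (c / (1 - \<kappa>))"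
proof -
  obtain r where r: "d = ennreal r" "0 \<le> r"
    using assms(1) by (cases d rule: ennreal_cases) auto
  have c: "ennreal c = ennreal (max 0 c)"
    by (cases "0 \<le> c") (auto simp: ennreal_neg)
  have "ennreal r \<le> ennreal (\<kappa> * r) + ennreal (max 0 c)"
    using le r \<open>0 \<le> \<kappa>\<close> unfolding c by (simp add: ennreal_mult)
  then have "ennreal r \<le> ennreal (\<kappa> * r + max 0 c)"
    using r(2) \<open>0 \<le> \<kappa>\<close> by (subst ennreal_plus) auto
  then have "r \<le> \<kappa> * r + max 0 c"
    using r(2) \<open>0 \<le> \<kappa>\<close> by (subst (asm) ennreal_le_iff) auto
  then have "r \<le> max 0 c / (1 - \<kappa>)"
    using \<open>\<kappa> < 1\<close> by (simp add: field_simps)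
  then show ?thesis
    using \<open>\<kappa> < 1\<close> r by (cases "0 \<le> c") (auto simp: ennreal_leI max_def divide_nonpos_pos)
qed

lemma contraction_fixed_point_perturbation:
  assumes contr: "contraction_on_ball S M F \<kappa>" and "0 \<le> \<kappa>" "\<kappa> < 1"
    and V: "V \<in> bball S M" "F V = V"
    and W: "W \<in> bball S M" "G W = W"
    and close: "supnorm S (\<lambda>s. F W s - G W s) \<le> ennreal \<delta>"
  shows "supnorm S (\<lambda>s. V s - W s) \<le> ennreal (\<delta> / (1 - \<kappa>))"
proof (rule ennreal_le_div_of_le_contraction)
  show "supnorm S (\<lambda>s. V s - W s) \<noteq> top"
    using V(1) W(1) by (rule supnorm_diff_bball_neq_top)
  have "supnorm S (\<lambda>s. V s - W s) = supnorm S (\<lambda>s. (F V s - F W s) + (F W s - G W s))"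
    using V(2) W(2) by simp
  also have "\<dots> \<le> supnorm S (\<lambda>s. F V s - F W s) + supnorm S (\<lambda>s. F W s - G W s)"
    by (rule supnorm_add_le)
  also have "\<dots> \<le> ennreal \<kappa> * supnorm S (\<lambda>s. V s - W s) + ennreal \<delta>"
    using contr V(1) W(1) close unfolding contraction_on_ball_def by (blast intro: add_mono)
  finally show "supnorm S (\<lambda>s. V s - W s) \<le> ennreal \<kappa> * supnorm S (\<lambda>s. V s - W s) + ennreal \<delta>" .
qed fact+

theorem theorem5:
  fixes Y :: "'y measure" and X :: "'x measure" and S :: "'s measure"
    and MY MX M L \<kappa> \<epsilon> :: real
    and ctx :: "(('y \<Rightarrow> real) \<Rightarrow> ('x \<Rightarrow> real)) \<Rightarrow> (('s \<Rightarrow> real) \<Rightarrow> ('s \<Rightarrow> real))"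
    and TM TN :: "('y \<Rightarrow> real) \<Rightarrow> ('x \<Rightarrow> real)"
    and VM VN :: "'s \<Rightarrow> real"
  assumes gain: "certified_gain Y MY X MX S M ctx L"
    and kappa: "0 \<le> \<kappa>" "\<kappa> < 1"
    and TM: "transformer Y MY X MX TM" and TN: "transformer Y MY X MX TN"
    and contrM: "contraction_on_ball S M (ctx TM) \<kappa>"
    and contrN: "contraction_on_ball S M (ctx TN) \<kappa>"
    and fixM: "VM \<in> bball S M" "ctx TM VM = VM"
    and fixN: "VN \<in> bball S M" "ctx TN VN = VN"
    and eps: "dinf Y MY X TM TN \<le> ennreal \<epsilon>"
  shows "supnorm S (\<lambda>s. VM s - VN s) \<le> ennreal (L / (1 - \<kappa>) * \<epsilon>)"
proof -
  have "0 \<le> L"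
    using gain unfolding certified_gain_def by simp
  have "supnorm S (\<lambda>s. ctx TM VN s - ctx TN VN s) \<le> dinf S M S (ctx TM) (ctx TN)"
    using fixN(1) by (rule supnorm_le_dinf)
  also have "\<dots> \<le> ennreal L * dinf Y MY X TM TN"
    using gain TM TN unfolding certified_gain_def by blast
  also have "\<dots> \<le> ennreal (L * \<epsilon>)"
    using \<open>0 \<le> L\<close> eps by (simp add: ennreal_mult' mult_left_mono)
  finally have "supnorm S (\<lambda>s. VM s - VN s) \<le> ennreal (L * \<epsilon> / (1 - \<kappa>))"
    by (rule contraction_fixed_point_perturbation[where G = "ctx TN", OF contrM kappa fixM fixN])
  then show ?thesis
    by simp
qed

end
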